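(* If $Q$ and $Q'$ are proper quadrilaterals in $K^2$ sharing the same vertices, then the bisectors of $Q$ and $Q'$ are the same. Also, $\Phi_Q=\lambda\Phi_{Q'}$ for some $\lambda\in K$, and two lines are $Q$-orthogonal if and only if they are $Q'$-orthogonal.
   Context: $K$ is a field of characteristic $\neq 2$. Every line $L$ in $K^2$ has an equation $tX-uY+v=0$ normalized so that $t=1$ if $u=0$ and $u=1$ if $u\neq 0$; coefficients denoted $t_L,u_L,v_L$. A quadrilateral $Q=ABA'B'$ consists of four distinct lines $A,B,A',B'$ (sides), not all through one point, with adjacent sides ($A,B$; $B,A'$; $A',B'$; $B',A$) not parallel; opposite sides may be parallel. Vertices: $A\cap B$, $B\cap A'$, $A'\cap B'$, $B'\cap A$. $Q$ is proper if no three sides pass through a common point (so the four vertices are distinct). Let $\alpha=t_Au_Bu_{A'}u_{B'}-u_At_Bu_{A'}u_{B'}+u_Au_Bt_{A'}u_{B'}-u_Au_Bu_{A'}t_{B'}$, $\beta=t_Au_Bt_{A'}u_{B'}-u_At_Bu_{A'}t_{B'}$, $\gamma=t_At_Bt_{A'}u_{B'}-t_At_Bu_{A'}t_{B'}+t_Au_Bt_{A'}t_{B'}-u_At_Bt_{A'}t_{B'}$, $\Phi_Q(X,Y)=\gamma X^2-2\beta XY+\alpha Y^2$, and $\langle \mathbf v,\mathbf w\rangle_Q=\mathbf v^T\begin{pmatrix}\gamma&-\beta\\-\beta&\alpha\end{pmatrix}\mathbf w$. Lines $\ell_1,\ell_2$ are $Q$-orthogonal if $\langle (u_{\ell_1},t_{\ell_1}),(u_{\ell_2},t_{\ell_2})\rangle_Q=0$.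 A line $\ell$ crosses a pair $\{\ell_1,\ell_2\}$ if it is distinct from both and not parallel to both; $\mathrm{mid}_{\{\ell_1,\ell_2\}}(\ell)$ is the midpoint of the points where $\ell$ meets $\ell_1,\ell_2$ (the point at infinity of $\ell$ if one of them is at infinity). $\ell$ bisects $Q$ (is a bisector) if $\mathrm{mid}_{\mathsf P}(\ell)$ is the same for all pairs $\mathsf P$ among $\{A,A'\},\{B,B'\}$ that $\ell$ crosses; this common point is the midpoint of the bisector. *)

theory Defs
  imports Main
begin

text \<open>A line of K^2 is stored by its normalized coefficient triple (t, u, v) of the
 equation t X - u Y + v = 0, normalized so that t = 1 if u = 0 and u = 1 if u \<noteq> 0.\<close>

type_synonym 'a line = "'a \<times> 'a \<times> 'a"

definition tL :: "'a line \<Rightarrow> 'a" where "tL L = fst L"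
definition uL :: "'a line \<Rightarrow> 'a" where "uL L = fst (snd L)"
definition vL :: "'a line \<Rightarrow> 'a" where "vL L = snd (snd L)"

definition is_line :: "('a::field) line \<Rightarrow> bool" where
  "is_line L \<longleftrightarrow> (uL L = 0 \<and> tL L = 1) \<or> uL L = 1"

definition on_line :: "('a::field) line \<Rightarrow> 'a \<times> 'a \<Rightarrow> bool" where
  "on_line L p \<longleftrightarrow> tL L * fst p - uL L * snd p + vL L = 0"

definition parallel :: "('a::field) line \<Rightarrow> 'a line \<Rightarrow> bool" where
  "parallel L M \<longleftrightarrow> tL L * uL M - uL L * tL M = 0"

text \<open>Points of K^2 together with points at infinity; the point at infinity in the
 direction of a line L is represented by the normalized pair (t_L, u_L).\<close>
datatype 'a ppoint = Fin "'a \<times> 'a" | Infty "'a \<times> 'a"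

definition isect :: "('a::field) line \<Rightarrow> 'a line \<Rightarrow> 'a \<times> 'a" where
  "isect L M = (THE p. on_line L p \<and> on_line M p)"

definition meet :: "('a::field) line \<Rightarrow> 'a line \<Rightarrow> 'a ppoint" where
  "meet L M = (if parallel L M then Infty (tL L, uL L) else Fin (isect L M))"

definition crosses :: "('a::field) line \<Rightarrow> 'a line \<times> 'a line \<Rightarrow> bool" where
  "crosses L P \<longleftrightarrow> L \<noteq> fst P \<and> L \<noteq> snd P \<and> \<not> (parallel L (fst P) \<and> parallel L (snd P))"

definition mid :: "('a::field) line \<times> 'a line \<Rightarrow> 'a line \<Rightarrow> 'a ppoint" where
  "mid P L = (case (meet L (fst P), meet L (snd P)) of
      (Fin p, Fin q) \<Rightarrow> Fin ((fst p + fst q) / 2, (snd p + snd q) / 2)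
    | _ \<Rightarrow> Infty (tL L, uL L))"

type_synonym 'a quad = "'a line \<times> 'a line \<times> 'a line \<times> 'a line"

definition quadrilateral :: "('a::field) quad \<Rightarrow> bool" where
  "quadrilateral Q = (case Q of (A, B, A', B') \<Rightarrow>
     is_line A \<and> is_line B \<and> is_line A' \<and> is_line B' \<and>
     distinct [A, B, A', B'] \<and>
     \<not> (\<exists>p. on_line A p \<and> on_line B p \<and> on_line A' p \<and> on_line B' p) \<and>
     \<not> parallel A B \<and> \<not> parallel B A' \<and> \<not> parallel A' B' \<and> \<not> parallel B' A)"

definition proper_quad :: "('a::field) quad \<Rightarrow> bool" where
  "proper_quad Q = (quadrilateral Q \<and> (case Q of (A, B, A', B') \<Rightarrow>
     (\<forall>p. \<not> (on_line A p \<and> on_line B p \<and> on_line A' p) \<and>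
          \<not> (on_line A p \<and> on_line B p \<and> on_line B' p) \<and>
          \<not> (on_line A p \<and> on_line A' p \<and> on_line B' p) \<and>
          \<not> (on_line B p \<and> on_line A' p \<and> on_line B' p))))"

definition vertices :: "('a::field) quad \<Rightarrow> ('a \<times> 'a) set" where
  "vertices Q = (case Q of (A, B, A', B') \<Rightarrow>
     {isect A B, isect B A', isect A' B', isect B' A})"

definition alpha :: "('a::field) quad \<Rightarrow> 'a" where
  "alpha Q = (case Q of (A, B, A', B') \<Rightarrow>
     tL A * uL B * uL A' * uL B' - uL A * tL B * uL A' * uL B'
     + uL A * uL B * tL A' * uL B' - uL A * uL B * uL A' * tL B')"

definition beta :: "('a::field) quad \<Rightarrow> 'a" where
  "beta Q = (case Q of (A, B, A', B') \<Rightarrow>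
     tL A * uL B * tL A' * uL B' - uL A * tL B * uL A' * tL B')"

definition gamma :: "('a::field) quad \<Rightarrow> 'a" where
  "gamma Q = (case Q of (A, B, A', B') \<Rightarrow>
     tL A * tL B * tL A' * uL B' - tL A * tL B * uL A' * tL B'
     + tL A * uL B * tL A' * tL B' - uL A * tL B * tL A' * tL B')"

definition Phi :: "('a::field) quad \<Rightarrow> 'a \<Rightarrow> 'a \<Rightarrow> 'a" where
  "Phi Q X Y = gamma Q * X^2 - 2 * beta Q * X * Y + alpha Q * Y^2"

definition qinner :: "('a::field) quad \<Rightarrow> 'a \<times> 'a \<Rightarrow> 'a \<times> 'a \<Rightarrow> 'a" where
  "qinner Q v w = gamma Q * fst v * fst w - beta Q * fst v * snd w
                  - beta Q * snd v * fst w + alpha Q * snd v * snd w"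

definition q_orthogonal :: "('a::field) quad \<Rightarrow> 'a line \<Rightarrow> 'a line \<Rightarrow> bool" where
  "q_orthogonal Q L M \<longleftrightarrow> qinner Q (uL L, tL L) (uL M, tL M) = 0"

definition opp_pairs :: "'a quad \<Rightarrow> ('a line \<times> 'a line) set" where
  "opp_pairs Q = (case Q of (A, B, A', B') \<Rightarrow> {(A, A'), (B, B')})"

definition bisects :: "('a::field) line \<Rightarrow> 'a quad \<Rightarrow> bool" where
  "bisects L Q \<longleftrightarrow> is_line L \<and>
     (\<forall>P\<in>opp_pairs Q. \<forall>P'\<in>opp_pairs Q. crosses L P \<and> crosses L P' \<longrightarrow> mid P L = mid P' L)"

end

theory Submission
  imports Defs
begin

(*
  A proper quadrilateral is determined by its vertices in cyclic order: if a, b, c, d are the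
  intersections of consecutive sides, then the sides are the lines da, ab, bc, cd and no three
  vertices are collinear. Two proper quadrilaterals with the same vertices therefore differ by a
  permutation of a, b, c, d, and it suffices to show invariance under adjacent transpositions.

  The coefficients alpha, beta, gamma are multilinear in the directions of the four sides, so up
  to a common nonzero factor they are the same polynomials in the differences of the vertices,
  and these are alternating in a, b, c, d.

  For the bisectors, let h be the affine function defining a line L. The line through p and q
  meets L at (h p * q - h q * p) / (h p - h q), and for the three ways {ab, cd}, {da, bc},
  {ac, bd} of pairing the six lines joining two vertices, the sums of these points satisfy a
  linear relation with coefficients adding up to zero. So if L has the same midpoint on two
  pairings, it has it on the third; the degenerate positions (L through two vertices, or parallel
  to two opposite lines) are checked directly.
*)

lemma perm3_invariant:
  assumes "R x1 x2 x3"
    and swap_12: "\<And>a b c. R a b c \<Longrightarrow> R b a c" and swap_23: "\<And>a b c. R a b c \<Longrightarrow> R a c b"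
    and "distinct [x1, x2, x3]" "distinct [y1, y2, y3]" "{y1, y2, y3} = {x1, x2, x3}"
  shows "R y1 y2 y3"
proof -
  have "{y2, y3} = {x1, x2, x3} - {y1}" "y1 \<in> {x1, x2, x3}" using assms(5,6) by auto
  with assms(4) consider "y1 = x1" "{y2, y3} = {x2, x3}" | "y1 = x2" "{y2, y3} = {x1, x3}"
    | "y1 = x3" "{y2, y3} = {x1, x2}"
    by auto
  moreover have "R x1 x2 x3" "R x1 x3 x2" "R x2 x1 x3" "R x2 x3 x1" "R x3 x1 x2" "R x3 x2 x1"
    using assms(1) by (meson swap_12 swap_23)+
  ultimately show ?thesis by cases (auto simp: doubleton_eq_iff)
qed

lemma perm4_invariant:
  assumes "P x1 x2 x3 x4"
    and swap_12: "\<And>a b c d. P a b c d \<Longrightarrow> P b a c d"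
    and swap_23: "\<And>a b c d. P a b c d \<Longrightarrow> P a c b d"
    and swap_34: "\<And>a b c d. P a b c d \<Longrightarrow> P a b d c"
    and "distinct [x1, x2, x3, x4]" "distinct [y1, y2, y3, y4]" "{y1, y2, y3, y4} = {x1, x2, x3, x4}"
  shows "P y1 y2 y3 y4"
proof -
  have "{y2, y3, y4} = {x1, x2, x3, x4} - {y1}" "y1 \<in> {x1, x2, x3, x4}"
    using assms(6,7) by auto
  with assms(5) consider "y1 = x1" "{y2, y3, y4} = {x2, x3, x4}"
    | "y1 = x2" "{y2, y3, y4} = {x1, x3, x4}"
    | "y1 = x3" "{y2, y3, y4} = {x1, x2, x4}"
    | "y1 = x4" "{y2, y3, y4} = {x1, x2, x3}"
    by auto
  moreover have "P x1 x2 x3 x4" "P x2 x1 x3 x4" "P x3 x1 x2 x4" "P x4 x1 x2 x3"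
    using assms(1) by (meson swap_12 swap_23 swap_34)+
  ultimately show ?thesis
    using assms(5,6) perm3_invariant[where R = "P y1", OF _ swap_23 swap_34] by cases simp_all
qed

definition line_eval :: "('a::field) line \<Rightarrow> 'a \<times> 'a \<Rightarrow> 'a" where
  "line_eval L p = tL L * fst p - uL L * snd p + vL L"

lemma on_line_iff_line_eval: "on_line L p \<longleftrightarrow> line_eval L p = 0"
  by (simp add: on_line_def line_eval_def)

definition line_through :: "('a::field) \<times> 'a \<Rightarrow> 'a \<times> 'a \<Rightarrow> 'a line" where
  "line_through p q =
    (if fst p \<noteq> fst q then
       let m = (snd q - snd p) / (fst q - fst p) in (m, 1, snd p - m * fst p)
     else (1, 0, - fst p))"

lemma line_through_commute: "line_through p q = line_through q p"
proof (cases "fst p = fst q")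
  case False
  then have "fst q - fst p \<noteq> 0" "fst p - fst q \<noteq> 0" by auto
  then show ?thesis using False by (simp add: line_through_def field_simps)
qed (simp add: line_through_def)

lemma line_eval_line_through_left: "line_eval (line_through p q) p = 0"
  by (simp add: line_through_def line_eval_def tL_def uL_def vL_def)

lemma line_eval_line_through_right: "line_eval (line_through p q) q = 0"
  using line_eval_line_through_left[of q p] by (simp add: line_through_commute)

definition raw_line_through :: "('a::field) \<times> 'a \<Rightarrow> 'a \<times> 'a \<Rightarrow> 'a line" where
  "raw_line_through p q = (snd q - snd p, fst q - fst p, fst q * snd p - fst p * snd q)"

lemma tL_raw_line_through [simp]: "tL (raw_line_through p q) = snd q - snd p"
  by (simp add: raw_line_through_def tL_def)

lemma uL_raw_line_through [simp]: "uL (raw_line_through p q) = fst q - fst p"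
  by (simp add: raw_line_through_def uL_def)

lemma line_through_direction:
  assumes "p \<noteq> q"
  obtains k where "k \<noteq> 0" "tL (line_through p q) = k * tL (raw_line_through p q)"
    "uL (line_through p q) = k * uL (raw_line_through p q)"
proof (cases "fst p = fst q")
  case True
  with assms have "snd q - snd p \<noteq> 0" by (auto simp: prod_eq_iff)
  with True show ?thesis
    by (intro that[of "1 / (snd q - snd p)"])
      (simp_all add: line_through_def raw_line_through_def tL_def uL_def)
next
  case False
  then have "fst q - fst p \<noteq> 0" by simp
  with False show ?thesis
    by (intro that[of "1 / (fst q - fst p)"])
      (simp_all add: line_through_def raw_line_through_def tL_def uL_def)
qed

lemma line_through_unique:
  assumes "is_line L" "line_eval L p = 0" "line_eval L q = 0" "p \<noteq> q"
  shows "L = line_through p q"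
proof -
  obtain t u v where L: "L = (t, u, v)" by (cases L)
  obtain x1 y1 x2 y2 where pq: "p = (x1, y1)" "q = (x2, y2)" by (cases p, cases q)
  have e: "t * x1 - u * y1 + v = 0" "t * x2 - u * y2 + v = 0"
    using assms by (auto simp: L pq line_eval_def tL_def uL_def vL_def)
  show ?thesis
  proof (cases "u = 0")
    case True
    with assms(1) have "t = 1" by (simp add: is_line_def L tL_def uL_def)
    with True e have "x1 = x2" "v = - x1" by (auto simp: add_eq_0_iff)
    with True \<open>t = 1\<close> show ?thesis by (simp add: L pq line_through_def)
  next
    case False
    with assms(1) have u: "u = 1" by (simp add: is_line_def L tL_def uL_def)
    have "x1 \<noteq> x2"
    proof
      assume "x1 = x2"
      with e u have "y1 = y2" by algebra
      with \<open>x1 = x2\<close> assms(4) show False by (simp add: pq)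
    qed
    have "y2 - y1 = t * (x2 - x1)" "v = y1 - t * x1"
      using e u by algebra+
    with \<open>x1 \<noteq> x2\<close> have "t = (y2 - y1) / (x2 - x1)" "v = y1 - t * x1"
      by (simp_all add: field_simps)
    with \<open>x1 \<noteq> x2\<close> u show ?thesis by (simp add: L pq line_through_def)
  qed
qed

lemma eq_line_through_iff:
  assumes "is_line L" "p \<noteq> q"
  shows "L = line_through p q \<longleftrightarrow> line_eval L p = 0 \<and> line_eval L q = 0"
  using assms line_through_unique line_eval_line_through_left line_eval_line_through_right
  by metis

lemma parallel_line_through_iff:
  assumes "p \<noteq> q"
  shows "parallel L (line_through p q) \<longleftrightarrow> line_eval L p = line_eval L q"
proof -
  obtain k where k: "k \<noteq> 0" "tL (line_through p q) = k * (snd q - snd p)"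
    "uL (line_through p q) = k * (fst q - fst p)"
    using line_through_direction[OF assms] by auto
  have "tL L * uL (line_through p q) - uL L * tL (line_through p q)
      = k * (line_eval L q - line_eval L p)"
    unfolding k line_eval_def by (simp add: algebra_simps)
  with k(1) show ?thesis by (auto simp: parallel_def)
qed

definition collinear :: "('a::field) \<times> 'a \<Rightarrow> 'a \<times> 'a \<Rightarrow> 'a \<times> 'a \<Rightarrow> bool" where
  "collinear p q r \<longleftrightarrow>
     (fst q - fst p) * (snd r - snd p) - (snd q - snd p) * (fst r - fst p) = 0"

lemma collinear_commute_12: "collinear p q r \<longleftrightarrow> collinear q p r"
  unfolding collinear_def by algebra

lemma collinear_commute_23: "collinear p q r \<longleftrightarrow> collinear p r q"
  unfolding collinear_def by algebra

lemma collinear_if_line_eval_eq: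
  assumes "is_line L" "line_eval L p = line_eval L q" "line_eval L p = line_eval L r"
  shows "collinear p q r"
  using assms unfolding is_line_def collinear_def line_eval_def by algebra

lemma line_eval_zero_if_collinear:
  assumes "is_line L" "line_eval L p = 0" "line_eval L q = 0" "p \<noteq> q" "collinear p q r"
  shows "line_eval L r = 0"
proof -
  obtain k where "tL L = k * tL (raw_line_through p q)" "uL L = k * uL (raw_line_through p q)"
    using line_through_direction[OF assms(4)] line_through_unique[OF assms(1-4)] by metis
  then have "tL L = k * (snd q - snd p)" "uL L = k * (fst q - fst p)" by simp_all
  with assms(2,5) show ?thesis unfolding line_eval_def collinear_def by algebra
qed

definition general_position ::
    "('a::field) \<times> 'a \<Rightarrow> 'a \<times> 'a \<Rightarrow> 'a \<times> 'a \<Rightarrow> 'a \<times> 'a \<Rightarrow> bool" where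
  "general_position a b c d \<longleftrightarrow>
    \<not> collinear a b c \<and> \<not> collinear a b d \<and> \<not> collinear a c d \<and> \<not> collinear b c d"

lemma general_position_distinct: "general_position a b c d \<Longrightarrow> distinct [a, b, c, d]"
  by (auto simp: general_position_def collinear_def)

lemma general_position_swap_12: "general_position a b c d \<Longrightarrow> general_position b a c d"
  unfolding general_position_def by (metis collinear_commute_12 collinear_commute_23)

lemma general_position_swap_23: "general_position a b c d \<Longrightarrow> general_position a c b d"
  unfolding general_position_def by (metis collinear_commute_12 collinear_commute_23)

lemma general_position_swap_34: "general_position a b c d \<Longrightarrow> general_position a b d c"
  unfolding general_position_def by (metis collinear_commute_12 collinear_commute_23)

lemma general_position_rotate: "general_position a b c d \<Longrightarrow> general_position d a b c"
  unfolding general_position_def by (metis collinear_commute_12 collinear_commute_23)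

lemma line_eval_not_three_eq:
  assumes "is_line L" "general_position a b c d"
  shows "\<not> (line_eval L a = line_eval L b \<and> line_eval L a = line_eval L c)"
    "\<not> (line_eval L a = line_eval L b \<and> line_eval L a = line_eval L d)"
    "\<not> (line_eval L a = line_eval L c \<and> line_eval L a = line_eval L d)"
    "\<not> (line_eval L b = line_eval L c \<and> line_eval L b = line_eval L d)"
  using assms(2) collinear_if_line_eval_eq[OF assms(1), of a b c]
    collinear_if_line_eval_eq[OF assms(1), of a b d]
    collinear_if_line_eval_eq[OF assms(1), of a c d]
    collinear_if_line_eval_eq[OF assms(1), of b c d]
  unfolding general_position_def by auto

lemma isect_eqI:
  assumes "\<not> parallel L M" "line_eval L z = 0" "line_eval M z = 0"
  shows "isect L M = z"
  unfolding isect_def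
proof (rule the_equality)
  show "on_line L z \<and> on_line M z" using assms by (simp add: on_line_iff_line_eval)
next
  fix w assume "on_line L w \<and> on_line M w"
  then have w: "line_eval L w = 0" "line_eval M w = 0" by (auto simp: on_line_iff_line_eval)
  define D where "D = tL L * uL M - uL L * tL M"
  have "D \<noteq> 0" using assms(1) by (simp add: parallel_def D_def)
  moreover have "(fst w - fst z) * D = 0" "(snd w - snd z) * D = 0"
    using w assms(2,3) unfolding D_def line_eval_def by algebra+
  ultimately show "w = z" by (simp add: prod_eq_iff)
qed

lemma line_eval_isect:
  assumes "\<not> parallel L M"
  shows "line_eval L (isect L M) = 0" "line_eval M (isect L M) = 0"
proof -
  define D where "D = tL L * uL M - uL L * tL M"
  have "D \<noteq> 0" using assms by (simp add: parallel_def D_def)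
  define z where "z = ((uL L * vL M - uL M * vL L) / D, (tL L * vL M - tL M * vL L) / D)"
  have "inverse D * D = 1" using \<open>D \<noteq> 0\<close> by simp
  then have "line_eval L z = 0" "line_eval M z = 0"
    unfolding z_def line_eval_def D_def divide_inverse fst_conv snd_conv by algebra+
  moreover from this have "isect L M = z" using isect_eqI assms by blast
  ultimately show "line_eval L (isect L M) = 0" "line_eval M (isect L M) = 0" by simp_all
qed

(* The zero of the affine function taking the value a at x and b at y. *)
definition secant_root :: "('a::field) \<Rightarrow> 'a \<Rightarrow> 'a \<Rightarrow> 'a \<Rightarrow> 'a" where
  "secant_root a b x y = (a * y - b * x) / (a - b)"

definition secant_point :: "('a::field) \<Rightarrow> 'a \<Rightarrow> 'a \<times> 'a \<Rightarrow> 'a \<times> 'a \<Rightarrow> 'a \<times> 'a" where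
  "secant_point a b p q = (secant_root a b (fst p) (fst q), secant_root a b (snd p) (snd q))"

lemma line_eval_secant_point:
  assumes "a \<noteq> b"
  shows "line_eval K (secant_point a b p q) = (a * line_eval K q - b * line_eval K p) / (a - b)"
proof -
  have "inverse (a - b) * (a - b) = 1" using assms by simp
  then show ?thesis
    unfolding secant_point_def secant_root_def line_eval_def divide_inverse fst_conv snd_conv
    by algebra
qed

lemma meet_line_through:
  assumes "p \<noteq> q" "line_eval L p \<noteq> line_eval L q"
  shows "meet L (line_through p q) = Fin (secant_point (line_eval L p) (line_eval L q) p q)"
proof -
  have "\<not> parallel L (line_through p q)" using assms by (simp add: parallel_line_through_iff)
  moreover from this assms(2)
  have "isect L (line_through p q) = secant_point (line_eval L p) (line_eval L q) p q"
    by (intro isect_eqI) (simp_all add: line_eval_secant_point line_eval_line_through_left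
        line_eval_line_through_right)
  ultimately show ?thesis by (simp add: meet_def)
qed

definition midpoint :: "('a::field) \<times> 'a \<Rightarrow> 'a \<times> 'a \<Rightarrow> 'a \<times> 'a" where
  "midpoint p q = ((fst p + fst q) / 2, (snd p + snd q) / 2)"

lemma midpoint_eq_iff:
  assumes "(2::'a::field) \<noteq> 0"
  shows "midpoint p q = midpoint r (s :: 'a \<times> 'a) \<longleftrightarrow>
    fst p + fst q = fst r + fst s \<and> snd p + snd q = snd r + snd s"
proof -
  have "x / 2 = y / 2 \<longleftrightarrow> x = y" for x y :: 'a using assms by simp
  then show ?thesis by (simp add: midpoint_def)
qed

lemma midpoint_commute: "midpoint p q = midpoint q p"
  by (simp add: midpoint_def add.commute)

lemma mid_line_through:
  assumes "p \<noteq> q" "r \<noteq> s"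
  shows "mid (line_through p q, line_through r s) L =
    (if line_eval L p = line_eval L q \<or> line_eval L r = line_eval L s then Infty (tL L, uL L)
     else Fin (midpoint (secant_point (line_eval L p) (line_eval L q) p q)
                        (secant_point (line_eval L r) (line_eval L s) r s)))"
  using assms parallel_line_through_iff[OF assms(1), of L]
    parallel_line_through_iff[OF assms(2), of L]
  by (simp add: mid_def meet_line_through midpoint_def) (simp add: meet_def)

lemma crosses_line_through_iff:
  assumes "is_line L" "p \<noteq> q" "r \<noteq> s"
  shows "crosses L (line_through p q, line_through r s) \<longleftrightarrow>
    \<not> (line_eval L p = 0 \<and> line_eval L q = 0) \<and>
    \<not> (line_eval L r = 0 \<and> line_eval L s = 0) \<and>
    \<not> (line_eval L p = line_eval L q \<and> line_eval L r = line_eval L s)"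
  using assms by (simp add: crosses_def eq_line_through_iff parallel_line_through_iff)

lemma secant_root_zero_left: "b \<noteq> 0 \<Longrightarrow> secant_root 0 b x y = x"
  by (simp add: secant_root_def)

lemma secant_root_zero_right: "a \<noteq> 0 \<Longrightarrow> secant_root a 0 x y = y"
  by (simp add: secant_root_def)

lemma secant_root_parallel_sums:
  assumes "a \<noteq> b"
  shows "secant_root a b x1 x2 + secant_root b a x3 x4
       = secant_root a b x1 x3 + secant_root b a x2 x4"
proof -
  have "a - b \<noteq> 0" "b - a \<noteq> 0" using assms by auto
  then show ?thesis by (simp add: secant_root_def field_simps)
qed

lemma secant_root_sums_eq:
  fixes a1 a2 a3 a4 :: "'a::field"
  assumes "distinct [a1, a2, a3, a4]"
    and "secant_root a1 a2 x1 x2 + secant_root a3 a4 x3 x4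
       = secant_root a4 a1 x4 x1 + secant_root a2 a3 x2 x3"
  shows "secant_root a1 a2 x1 x2 + secant_root a3 a4 x3 x4
       = secant_root a1 a3 x1 x3 + secant_root a2 a4 x2 x4"
proof -
  have "inverse (a1 - a2) * (a1 - a2) = 1" "inverse (a3 - a4) * (a3 - a4) = 1"
    "inverse (a1 - a3) * (a1 - a3) = 1" "inverse (a2 - a4) * (a2 - a4) = 1"
    "inverse (a4 - a1) * (a4 - a1) = 1" "inverse (a2 - a3) * (a2 - a3) = 1"
    using assms(1) by auto
  then have "(a3 - a1) * (a4 - a2) * (secant_root a1 a2 x1 x2 + secant_root a3 a4 x3 x4
       - (secant_root a1 a3 x1 x3 + secant_root a2 a4 x2 x4))
     = (a3 - a2) * (a4 - a1) * (secant_root a1 a2 x1 x2 + secant_root a3 a4 x3 x4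
       - (secant_root a4 a1 x4 x1 + secant_root a2 a3 x2 x3))"
    unfolding secant_root_def divide_inverse by algebra
  also have "\<dots> = 0" using assms(2) by simp
  finally show ?thesis using assms(1) by (simp only: mult_eq_0_iff right_minus_eq) auto
qed

lemma secant_root_sums_eq_coincident:
  fixes a1 a2 a4 :: "'a::field"
  assumes "a1 \<noteq> a2" "a1 \<noteq> a4"
    and "secant_root a1 a2 x1 x2 + secant_root a1 a4 x3 x4
       = secant_root a4 a1 x4 x1 + secant_root a2 a1 x2 x3"
  shows "(x3 - x1) * a1 * (a2 - a4) = 0"
proof -
  have "inverse (a1 - a2) * (a1 - a2) = 1" "inverse (a1 - a4) * (a1 - a4) = 1"
    "inverse (a4 - a1) * (a4 - a1) = 1" "inverse (a2 - a1) * (a2 - a1) = 1"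
    using assms(1,2) by auto
  then have "(a1 - a2) * (a1 - a4) * (secant_root a1 a2 x1 x2 + secant_root a1 a4 x3 x4
       - secant_root a4 a1 x4 x1 - secant_root a2 a1 x2 x3) = (x3 - x1) * a1 * (a2 - a4)"
    unfolding secant_root_def divide_inverse by algebra
  with assms(3) show ?thesis by simp
qed

lemma mid_eq_if_not_crosses:
  assumes "is_line L" "general_position a b c d"
    and "\<not> crosses L (line_through d a, line_through b c)"
  shows "mid (line_through a b, line_through c d) L = mid (line_through a c, line_through b d) L"
proof -
  let ?h = "line_eval L"
  have ne: "distinct [a, b, c, d]" using general_position_distinct[OF assms(2)] .
  note three = line_eval_not_three_eq[OF assms(1,2)]
  from assms(3) ne
  consider "?h d = 0" "?h a = 0" | "?h b = 0" "?h c = 0" | "?h d = ?h a" "?h b = ?h c"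
    by (auto simp: crosses_line_through_iff[OF assms(1)])
  then show ?thesis
  proof cases
    case 1
    with three have "?h b \<noteq> 0" "?h c \<noteq> 0" by auto
    with 1 ne show ?thesis
      by (simp add: mid_line_through secant_point_def secant_root_zero_left secant_root_zero_right)
  next
    case 2
    with three have "?h a \<noteq> 0" "?h d \<noteq> 0" by auto
    with 2 ne show ?thesis
      by (simp add: mid_line_through secant_point_def secant_root_zero_left secant_root_zero_right
          midpoint_commute)
  next
    case 3
    with three have "?h a \<noteq> ?h b" by auto
    with 3 ne show ?thesis
      by (simp add: mid_line_through secant_point_def midpoint_def secant_root_parallel_sums)
  qed
qed

lemma mid_eq_if_mid_eq_third:
  assumes "(2::'a::field) \<noteq> 0" "is_line (L :: 'a line)" "general_position a b c d"
    and XY: "mid (line_through a b, line_through c d) L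
           = mid (line_through d a, line_through b c) L"
    and cZ: "crosses L (line_through a c, line_through b d)"
  shows "mid (line_through a b, line_through c d) L = mid (line_through a c, line_through b d) L"
proof -
  let ?h = "line_eval L"
  have ne: "distinct [a, b, c, d]" using general_position_distinct[OF assms(3)] .
  note three = line_eval_not_three_eq[OF assms(2,3)]
  have X: "?h a \<noteq> ?h b \<and> ?h c \<noteq> ?h d"
  proof (rule ccontr)
    assume X_infinite: "\<not> (?h a \<noteq> ?h b \<and> ?h c \<noteq> ?h d)"
    with XY ne have "?h d = ?h a \<or> ?h b = ?h c"
      by (auto simp: mid_line_through split: if_splits)
    with X_infinite three show False by auto
  qed
  with XY ne have Y: "?h d \<noteq> ?h a \<and> ?h b \<noteq> ?h c"
    by (auto simp: mid_line_through split: if_splits)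
  with X XY ne assms(1) have sums:
    "secant_root (?h a) (?h b) (fst a) (fst b) + secant_root (?h c) (?h d) (fst c) (fst d)
       = secant_root (?h d) (?h a) (fst d) (fst a) + secant_root (?h b) (?h c) (fst b) (fst c)"
    "secant_root (?h a) (?h b) (snd a) (snd b) + secant_root (?h c) (?h d) (snd c) (snd d)
       = secant_root (?h d) (?h a) (snd d) (snd a) + secant_root (?h b) (?h c) (snd b) (snd c)"
    by (auto simp: mid_line_through midpoint_eq_iff secant_point_def)
  have Z: "?h a \<noteq> ?h c \<and> ?h b \<noteq> ?h d"
  proof (rule ccontr)
    assume "\<not> (?h a \<noteq> ?h c \<and> ?h b \<noteq> ?h d)"
    then consider "?h c = ?h a" | "?h d = ?h b" by auto
    then show False
    proof cases
      case 1
      have "(fst c - fst a) * ?h a * (?h b - ?h d) = 0"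
        "(snd c - snd a) * ?h a * (?h b - ?h d) = 0"
        using sums X Y 1 by (intro secant_root_sums_eq_coincident; simp)+
      moreover have "fst c - fst a \<noteq> 0 \<or> snd c - snd a \<noteq> 0"
        using ne by (auto simp: prod_eq_iff)
      ultimately have "?h a = 0 \<or> ?h b = ?h d" by auto
      with 1 cZ ne show False by (auto simp: crosses_line_through_iff[OF assms(2)])
    next
      case 2
      have "(fst d - fst b) * ?h b * (?h c - ?h a) = 0"
        "(snd d - snd b) * ?h b * (?h c - ?h a) = 0"
        using sums[symmetric] X Y 2
          secant_root_sums_eq_coincident[of "?h b" "?h c" "?h a" "fst b" "fst c" "fst d" "fst a"]
          secant_root_sums_eq_coincident[of "?h b" "?h c" "?h a" "snd b" "snd c" "snd d" "snd a"]
        by (simp_all add: ac_simps)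
      moreover have "fst d - fst b \<noteq> 0 \<or> snd d - snd b \<noteq> 0"
        using ne by (auto simp: prod_eq_iff)
      ultimately have "?h b = 0 \<or> ?h c = ?h a" by auto
      with 2 cZ ne show False by (auto simp: crosses_line_through_iff[OF assms(2)])
    qed
  qed
  have "distinct [?h a, ?h b, ?h c, ?h d]" using X Y Z by auto
  from secant_root_sums_eq[OF this sums(1)] secant_root_sums_eq[OF this sums(2)]
  show ?thesis
    using X Z ne assms(1) by (simp add: mid_line_through midpoint_eq_iff secant_point_def)
qed

definition mids_agree ::
    "('a::field) line \<Rightarrow> 'a line \<times> 'a line \<Rightarrow> 'a line \<times> 'a line \<Rightarrow> bool" where
  "mids_agree L P P' \<longleftrightarrow> (crosses L P \<and> crosses L P' \<longrightarrow> mid P L = mid P' L)"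

lemma mids_agree_commute: "mids_agree L P P' \<longleftrightarrow> mids_agree L P' P"
  by (auto simp: mids_agree_def)

lemma mid_swap: "mid (M, N) L = mid (N, M) L"
  by (simp add: mid_def add.commute split: ppoint.splits)

lemma crosses_swap: "crosses L (M, N) \<longleftrightarrow> crosses L (N, M)"
  by (auto simp: crosses_def)

lemma mids_agree_swap_left: "mids_agree L (M, N) P \<longleftrightarrow> mids_agree L (N, M) P"
  by (simp add: mids_agree_def mid_swap crosses_swap)

lemma mids_agree_swap_right: "mids_agree L P (M, N) \<longleftrightarrow> mids_agree L P (N, M)"
  by (simp add: mids_agree_def mid_swap crosses_swap)

lemma mids_agree_pairings:
  assumes "(2::'a::field) \<noteq> 0" "is_line (L :: 'a line)" "general_position a b c d"
    and "mids_agree L (line_through a b, line_through c d) (line_through d a, line_through b c)"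
  shows "mids_agree L (line_through a b, line_through c d) (line_through a c, line_through b d)"
  unfolding mids_agree_def
proof
  assume crosses: "crosses L (line_through a b, line_through c d) \<and>
    crosses L (line_through a c, line_through b d)"
  show "mid (line_through a b, line_through c d) L = mid (line_through a c, line_through b d) L"
  proof (cases "crosses L (line_through d a, line_through b c)")
    case True
    with assms(4) crosses show ?thesis
      by (intro mid_eq_if_mid_eq_third[OF assms(1-3)]) (simp_all add: mids_agree_def)
  next
    case False
    then show ?thesis by (rule mid_eq_if_not_crosses[OF assms(2,3)])
  qed
qed

lemma mids_agree_pairings_iff:
  assumes "(2::'a::field) \<noteq> 0" "is_line (L :: 'a line)" "general_position a b c d"
  shows "mids_agree L (line_through a b, line_through c d) (line_through d a, line_through b c)
    \<longleftrightarrow> mids_agree L (line_through a b, line_through c d) (line_through a c, line_through b d)"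
  using mids_agree_pairings[OF assms]
    mids_agree_pairings[OF assms(1,2) general_position_swap_34[OF assms(3)]]
  by (auto simp: line_through_commute mids_agree_swap_left mids_agree_commute)

definition quad_through ::
    "('a::field) \<times> 'a \<Rightarrow> 'a \<times> 'a \<Rightarrow> 'a \<times> 'a \<Rightarrow> 'a \<times> 'a \<Rightarrow> 'a quad" where
  "quad_through a b c d =
    (line_through d a, line_through a b, line_through b c, line_through c d)"

lemma bisects_quad_through_iff:
  "bisects L (quad_through a b c d) \<longleftrightarrow>
    is_line L \<and>
    mids_agree L (line_through a b, line_through c d) (line_through d a, line_through b c)"
  by (auto simp: bisects_def opp_pairs_def quad_through_def mids_agree_def)

lemma bisects_quad_through_swap_12:
  assumes "(2::'a::field) \<noteq> 0" "general_position a b c (d :: 'a \<times> 'a)"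
  shows "bisects L (quad_through b a c d) \<longleftrightarrow> bisects L (quad_through a b c d)"
  using mids_agree_pairings_iff[OF assms(1) _ assms(2), of L]
  by (auto simp: bisects_quad_through_iff line_through_commute[of b a]
      line_through_commute[of d b] mids_agree_swap_right[of L _ "line_through b d"])

lemma bisects_quad_through_swap_34:
  assumes "(2::'a::field) \<noteq> 0" "general_position a b c (d :: 'a \<times> 'a)"
  shows "bisects L (quad_through a b d c) \<longleftrightarrow> bisects L (quad_through a b c d)"
  using mids_agree_pairings_iff[OF assms(1) _ assms(2), of L]
  by (auto simp: bisects_quad_through_iff line_through_commute[of d c]
      line_through_commute[of c a])

lemma bisects_quad_through_swap_23:
  assumes "(2::'a::field) \<noteq> 0" "general_position a b c (d :: 'a \<times> 'a)"
  shows "bisects L (quad_through a c b d) \<longleftrightarrow> bisects L (quad_through a b c d)"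
  using mids_agree_pairings_iff[OF assms(1) _ general_position_rotate[OF assms(2)], of L]
  by (auto simp: bisects_quad_through_iff line_through_commute[of c b]
      line_through_commute[of d b] mids_agree_swap_right[of L _ "line_through c d"]
      mids_agree_swap_right[of L _ "line_through b d"]
      mids_agree_commute[of L "(line_through d a, line_through b c)"])

definition coeffs_proportional :: "('a::field) quad \<Rightarrow> 'a quad \<Rightarrow> bool" where
  "coeffs_proportional Q Q' \<longleftrightarrow>
    (\<exists>k. k \<noteq> 0 \<and> alpha Q = k * alpha Q' \<and> beta Q = k * beta Q' \<and> gamma Q = k * gamma Q')"

lemma coeffs_proportional_refl: "coeffs_proportional Q Q"
  unfolding coeffs_proportional_def by (rule exI[of _ 1]) simp

lemma coeffs_proportional_sym: "coeffs_proportional Q Q' \<Longrightarrow> coeffs_proportional Q' Q"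
  unfolding coeffs_proportional_def
  by (metis (no_types) inverse_nonzero_iff_nonzero mult.assoc left_inverse mult_1)

lemma coeffs_proportional_trans:
  "coeffs_proportional Q Q' \<Longrightarrow> coeffs_proportional Q' Q'' \<Longrightarrow> coeffs_proportional Q Q''"
  unfolding coeffs_proportional_def by (metis (no_types) mult.assoc no_zero_divisors)

lemma Phi_eq_if_coeffs_proportional:
  assumes "coeffs_proportional Q Q'"
  shows "\<exists>c. \<forall>X Y. Phi Q X Y = c * Phi Q' X Y"
proof -
  obtain k where "alpha Q = k * alpha Q'" "beta Q = k * beta Q'" "gamma Q = k * gamma Q'"
    using assms by (auto simp: coeffs_proportional_def)
  then have "Phi Q X Y = k * Phi Q' X Y" for X Y by (simp add: Phi_def algebra_simps)
  then show ?thesis by blast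
qed

lemma q_orthogonal_iff_if_coeffs_proportional:
  assumes "coeffs_proportional Q Q'"
  shows "q_orthogonal Q L M \<longleftrightarrow> q_orthogonal Q' L M"
proof -
  obtain k where "k \<noteq> 0" "alpha Q = k * alpha Q'" "beta Q = k * beta Q'" "gamma Q = k * gamma Q'"
    using assms by (auto simp: coeffs_proportional_def)
  then have "qinner Q v w = k * qinner Q' v w" for v w by (simp add: qinner_def algebra_simps)
  with \<open>k \<noteq> 0\<close> show ?thesis by (simp add: q_orthogonal_def)
qed

definition raw_quad_through ::
    "('a::field) \<times> 'a \<Rightarrow> 'a \<times> 'a \<Rightarrow> 'a \<times> 'a \<Rightarrow> 'a \<times> 'a \<Rightarrow> 'a quad" where
  "raw_quad_through a b c d =
    (raw_line_through d a, raw_line_through a b, raw_line_through b c, raw_line_through c d)"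

lemma coeffs_proportional_scale:
  assumes "k1 \<noteq> 0" "k2 \<noteq> 0" "k3 \<noteq> 0" "k4 \<noteq> 0"
    "tL A = k1 * tL A0" "uL A = k1 * uL A0" "tL B = k2 * tL B0" "uL B = k2 * uL B0"
    "tL C = k3 * tL C0" "uL C = k3 * uL C0" "tL D = k4 * tL D0" "uL D = k4 * uL D0"
  shows "coeffs_proportional (A, B, C, D) (A0, B0, C0, D0)"
  unfolding coeffs_proportional_def
  by (rule exI[of _ "k1 * k2 * k3 * k4"]) (simp add: assms alpha_def beta_def gamma_def, algebra)

lemma coeffs_proportional_quad_through_raw_quad_through:
  assumes "distinct [a, b, c, d]"
  shows "coeffs_proportional (quad_through a b c d) (raw_quad_through a b c d)"
proof -
  have "d \<noteq> a" "a \<noteq> b" "b \<noteq> c" "c \<noteq> d" using assms by auto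
  from this[THEN line_through_direction] show ?thesis
    unfolding quad_through_def raw_quad_through_def by (metis coeffs_proportional_scale)
qed

lemma coeffs_proportional_raw_quad_through_swap_12:
  "coeffs_proportional (raw_quad_through b a c d) (raw_quad_through a b c d)"
  unfolding coeffs_proportional_def
  by (rule exI[of _ "-1"])
    (simp add: alpha_def beta_def gamma_def raw_quad_through_def raw_line_through_def tL_def uL_def,
      algebra)

lemma coeffs_proportional_raw_quad_through_swap_23:
  "coeffs_proportional (raw_quad_through a c b d) (raw_quad_through a b c d)"
  unfolding coeffs_proportional_def
  by (rule exI[of _ "-1"])
    (simp add: alpha_def beta_def gamma_def raw_quad_through_def raw_line_through_def tL_def uL_def,
      algebra)

lemma coeffs_proportional_raw_quad_through_swap_34:
  "coeffs_proportional (raw_quad_through a b d c) (raw_quad_through a b c d)"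
  unfolding coeffs_proportional_def
  by (rule exI[of _ "-1"])
    (simp add: alpha_def beta_def gamma_def raw_quad_through_def raw_line_through_def tL_def uL_def,
      algebra)

lemma bisects_quad_through_perm:
  assumes "(2::'a::field) \<noteq> 0" "general_position a b c (d :: 'a \<times> 'a)"
    and "distinct [a', b', c', d']" "{a', b', c', d'} = {a, b, c, d}"
  shows "bisects L (quad_through a' b' c' d') \<longleftrightarrow> bisects L (quad_through a b c d)"
proof -
  let ?P = "\<lambda>a' b' c' d'. general_position a' b' c' d' \<and>
    (\<forall>L. bisects L (quad_through a' b' c' d') \<longleftrightarrow> bisects L (quad_through a b c d))"
  have "?P a' b' c' d'"
    using general_position_distinct[OF assms(2)] assms(3,4)
  proof (rule perm4_invariant[where P = ?P, rotated 4])
    show "?P a b c d" using assms(2) by simp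
  next
    fix w x y z assume P: "?P w x y z"
    then have gp: "general_position w x y z" by blast
    show "?P x w y z"
      using P bisects_quad_through_swap_12[OF assms(1) gp] general_position_swap_12[OF gp] by simp
    show "?P w y x z"
      using P bisects_quad_through_swap_23[OF assms(1) gp] general_position_swap_23[OF gp] by simp
    show "?P w x z y"
      using P bisects_quad_through_swap_34[OF assms(1) gp] general_position_swap_34[OF gp] by simp
  qed
  then show ?thesis by blast
qed

lemma coeffs_proportional_quad_through_perm:
  assumes "distinct [a, b, c, d]" "distinct [a', b', c', d']" "{a', b', c', d'} = {a, b, c, d}"
  shows "coeffs_proportional (quad_through a' b' c' d') (quad_through a b c d)"
proof -
  have "coeffs_proportional (raw_quad_through a' b' c' d') (raw_quad_through a b c d)"
    by (rule perm4_invariant[where P = "\<lambda>w x y z. coeffs_proportional (raw_quad_through w x y z) _",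
          OF coeffs_proportional_refl
          coeffs_proportional_trans[OF coeffs_proportional_raw_quad_through_swap_12]
          coeffs_proportional_trans[OF coeffs_proportional_raw_quad_through_swap_23]
          coeffs_proportional_trans[OF coeffs_proportional_raw_quad_through_swap_34] assms])
  then show ?thesis
    using coeffs_proportional_quad_through_raw_quad_through[OF assms(1)]
      coeffs_proportional_quad_through_raw_quad_through[OF assms(2)]
    by (meson coeffs_proportional_sym coeffs_proportional_trans)
qed

lemma proper_quad_eq_quad_through:
  assumes "proper_quad Q"
  obtains a b c d where "Q = quad_through a b c d" "general_position a b c d"
    "vertices Q = {a, b, c, d}"
proof -
  obtain A B A' B' where Q: "Q = (A, B, A', B')" by (cases Q)
  have lines: "is_line A" "is_line B" "is_line A'" "is_line B'"
    and np: "\<not> parallel A B" "\<not> parallel B A'" "\<not> parallel A' B'" "\<not> parallel B' A"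
    using assms by (auto simp: Q proper_quad_def quadrilateral_def)
  have not_concurrent: "\<not> (line_eval A p = 0 \<and> line_eval B p = 0 \<and> line_eval A' p = 0)"
    "\<not> (line_eval A p = 0 \<and> line_eval B p = 0 \<and> line_eval B' p = 0)"
    "\<not> (line_eval A p = 0 \<and> line_eval A' p = 0 \<and> line_eval B' p = 0)"
    "\<not> (line_eval B p = 0 \<and> line_eval A' p = 0 \<and> line_eval B' p = 0)" for p
    using assms unfolding Q proper_quad_def on_line_iff_line_eval prod.case by blast+
  define a b c d where "a = isect A B" "b = isect B A'" "c = isect A' B'" "d = isect B' A"
  have on: "line_eval A a = 0" "line_eval B a = 0" "line_eval B b = 0" "line_eval A' b = 0"
    "line_eval A' c = 0" "line_eval B' c = 0" "line_eval B' d = 0" "line_eval A d = 0"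
    unfolding a_b_c_d_def using line_eval_isect[OF np(1)] line_eval_isect[OF np(2)]
      line_eval_isect[OF np(3)] line_eval_isect[OF np(4)] by simp_all
  have off: "line_eval B' a \<noteq> 0" "line_eval B' b \<noteq> 0" "line_eval A b \<noteq> 0"
    "line_eval B c \<noteq> 0" "line_eval B d \<noteq> 0" "line_eval A' d \<noteq> 0"
    using not_concurrent(2)[of a] not_concurrent(4)[of b] not_concurrent(1)[of b]
      not_concurrent(4)[of c] not_concurrent(2)[of d] not_concurrent(3)[of d] on
    by auto
  from on off have ne: "d \<noteq> a" "a \<noteq> b" "b \<noteq> c" "c \<noteq> d" by auto
  have "\<not> collinear a b c" "\<not> collinear a b d"
    using line_eval_zero_if_collinear[OF lines(2) on(2,3) ne(2)] off by blast+
  moreover have "\<not> collinear c d a" "\<not> collinear c d b"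
    using line_eval_zero_if_collinear[OF lines(4) on(6,7) ne(4)] off by blast+
  moreover have "collinear a c d \<longleftrightarrow> collinear c d a" "collinear b c d \<longleftrightarrow> collinear c d b"
    using collinear_commute_12 collinear_commute_23 by blast+
  ultimately have "general_position a b c d" by (simp add: general_position_def)
  moreover have "Q = quad_through a b c d"
    using line_through_unique[OF lines(1) on(8,1) ne(1)]
      line_through_unique[OF lines(2) on(2,3) ne(2)]
      line_through_unique[OF lines(3) on(4,5) ne(3)]
      line_through_unique[OF lines(4) on(6,7) ne(4)]
    by (simp add: Q quad_through_def)
  moreover have "vertices Q = {a, b, c, d}" by (simp add: Q vertices_def a_b_c_d_def)
  ultimately show ?thesis using that by blast
qed

theorem proposition3p4:
  fixes Q Q' :: "('a::field) quad"
  assumes "(2::'a) \<noteq> 0"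
    and "proper_quad Q" and "proper_quad Q'"
    and "vertices Q = vertices Q'"
  shows "(\<forall>L. bisects L Q \<longleftrightarrow> bisects L Q')
       \<and> (\<exists>c::'a. \<forall>X Y. Phi Q X Y = c * Phi Q' X Y)
       \<and> (\<forall>L M. is_line L \<longrightarrow> is_line M \<longrightarrow> (q_orthogonal Q L M \<longleftrightarrow> q_orthogonal Q' L M))"
proof -
  obtain a b c d where Q: "Q = quad_through a b c d" "general_position a b c d"
    "vertices Q = {a, b, c, d}"
    using proper_quad_eq_quad_through[OF assms(2)] .
  obtain a' b' c' d' where Q': "Q' = quad_through a' b' c' d'" "general_position a' b' c' d'"
    "vertices Q' = {a', b', c', d'}"
    using proper_quad_eq_quad_through[OF assms(3)] .
  have same_vertices: "{a, b, c, d} = {a', b', c', d'}" using assms(4) Q(3) Q'(3) by simp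
  note distinct = general_position_distinct[OF Q(2)] general_position_distinct[OF Q'(2)]
  have "bisects L Q \<longleftrightarrow> bisects L Q'" for L
    unfolding Q(1) Q'(1)
    by (rule bisects_quad_through_perm[OF assms(1) Q'(2) distinct(1) same_vertices])
  moreover have "coeffs_proportional Q Q'"
    unfolding Q(1) Q'(1)
    by (rule coeffs_proportional_quad_through_perm[OF distinct(2,1) same_vertices])
  ultimately show ?thesis
    using Phi_eq_if_coeffs_proportional q_orthogonal_iff_if_coeffs_proportional by blast
qed

end
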